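(* For every integer $n\ge 0$ there is a surjective $\mathbb{R}$-algebra homomorphism $A_{\mathbb R}\to M_{n+1}(\mathbb{C})$.
   Context: $A_{\mathbb R}=\mathbb{R}\langle x_1,\dots,x_7\rangle/(r_1,\dots,r_7)$ with $r_1=[x_2,x_3]+[x_4,x_5]+[x_6,x_7]$, $r_2=[x_3,x_1]+[x_4,x_6]+[x_7,x_5]$, $r_3=[x_1,x_2]+[x_6,x_5]+[x_7,x_4]$, $r_4=[x_5,x_1]+[x_3,x_7]+[x_6,x_2]$, $r_5=[x_1,x_4]+[x_2,x_7]+[x_3,x_6]$, $r_6=[x_7,x_1]+[x_5,x_3]+[x_2,x_4]$, $r_7=[x_1,x_6]+[x_4,x_3]+[x_5,x_2]$. $M_{n+1}(\mathbb{C})$ is regarded as an $\mathbb{R}$-algebra. *)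

theory Defs
  imports "HOL-Analysis.Analysis"
begin

text \<open>Square complex matrices are modelled as complex^'n^'n (size CARD('n) = n+1,
  arbitrary n >= 0), with matrix product (**), identity mat 1 and real scalar
  multiplication scaleR; this is M_{n+1}(C) regarded as an R-algebra.\<close>

definition comm :: "complex^'n^'n \<Rightarrow> complex^'n^'n \<Rightarrow> complex^'n^'n" where
  "comm a b = a ** b - b ** a"

text \<open>The seven defining relations r_1..r_7 of A_R, evaluated at x_i := X i.\<close>
definition AR_relations :: "(nat \<Rightarrow> complex^'n^'n) \<Rightarrow> bool" where
  "AR_relations X \<longleftrightarrow>
     comm (X 2) (X 3) + comm (X 4) (X 5) + comm (X 6) (X 7) = 0 \<and>
     comm (X 3) (X 1) + comm (X 4) (X 6) + comm (X 7) (X 5) = 0 \<and>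
     comm (X 1) (X 2) + comm (X 6) (X 5) + comm (X 7) (X 4) = 0 \<and>
     comm (X 5) (X 1) + comm (X 3) (X 7) + comm (X 6) (X 2) = 0 \<and>
     comm (X 1) (X 4) + comm (X 2) (X 7) + comm (X 3) (X 6) = 0 \<and>
     comm (X 7) (X 1) + comm (X 5) (X 3) + comm (X 2) (X 4) = 0 \<and>
     comm (X 1) (X 6) + comm (X 4) (X 3) + comm (X 5) (X 2) = 0"

text \<open>Unital R-subalgebra of M_{n+1}(C) generated by a set S (the image of the
  R-algebra homomorphism A_R -> M_{n+1}(C) determined by the images of the generators).\<close>
inductive_set real_subalg_gen :: "(complex^'n^'n) set \<Rightarrow> (complex^'n^'n) set"
  for S where
  gen: "x \<in> S \<Longrightarrow> x \<in> real_subalg_gen S"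
| one: "mat 1 \<in> real_subalg_gen S"
| add: "x \<in> real_subalg_gen S \<Longrightarrow> y \<in> real_subalg_gen S \<Longrightarrow> x + y \<in> real_subalg_gen S"
| mult: "x \<in> real_subalg_gen S \<Longrightarrow> y \<in> real_subalg_gen S \<Longrightarrow> x ** y \<in> real_subalg_gen S"
| scale: "x \<in> real_subalg_gen S \<Longrightarrow> (r::real) *\<^sub>R x \<in> real_subalg_gen S"

end

theory Submission
  imports Defs "HOL-Combinatorics.Cycles"
begin

text \<open>For arbitrary matrices A and B, sending x1, x2, x3, x5, x6 to A, B, i, iA, -iB and x4, x7
  to 0 satisfies all seven relations, because i is central and i * i = -1. Take for A a
  diagonal matrix unit E_cc and for B the permutation matrix of a cyclic permutation
  \<sigma>: multiplying a matrix unit by B on the left moves its row index along \<sigma>, on the right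
  moves its column index against \<sigma>, so every matrix unit E_ab lies in the
  generated real algebra, and together with the scalar i these span all complex matrices.\<close>

lemma mat_matrix_mult_nth: "(mat c ** A) $ i $ j = c * A $ i $ j"
  by (simp add: matrix_matrix_mult_def mat_def if_distrib if_distribR cong: if_cong)

lemma matrix_mult_mat_nth: "(A ** mat c) $ i $ j = A $ i $ j * (c::'a::semiring_1)"
  by (simp add: matrix_matrix_mult_def mat_def if_distrib if_distribR cong: if_cong)

lemma mat_mult_commute: "mat c ** A = A ** mat (c::'a::comm_semiring_1)"
  by (simp add: vec_eq_iff mat_matrix_mult_nth matrix_mult_mat_nth mult.commute)

lemma matrix_diff_ldistrib: "A ** (B - C) = A ** B - A ** (C::'a::ring_1^'n^'m)"
  by (simp add: vec_eq_iff matrix_matrix_mult_def right_diff_distrib sum_subtractf)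

lemma matrix_minus_right: "A ** (- B) = - (A ** (B::'a::ring_1^'n^'m))"
  by (simp add: vec_eq_iff matrix_matrix_mult_def sum_negf)

lemma comm_mat_left [simp]: "comm (mat c) A = 0"
  by (simp add: comm_def mat_mult_commute)

lemma comm_mat_right [simp]: "comm A (mat c) = 0"
  by (simp add: comm_def mat_mult_commute)

lemma comm_zero_left [simp]: "comm 0 A = 0"
  by (simp add: comm_def)

lemma comm_zero_right [simp]: "comm A 0 = 0"
  by (simp add: comm_def)

lemma comm_mat_mult_left [simp]: "comm (mat c ** A) B = mat c ** comm A B"
proof -
  have "B ** (mat c ** A) = mat c ** (B ** A)"
    by (metis mat_mult_commute matrix_mul_assoc)
  then show ?thesis
    by (simp add: comm_def matrix_diff_ldistrib matrix_mul_assoc[symmetric])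
qed

lemma comm_mat_mult_right [simp]: "comm A (mat c ** B) = mat c ** comm A B"
proof -
  have "A ** (mat c ** B) = mat c ** (A ** B)"
    by (metis mat_mult_commute matrix_mul_assoc)
  then show ?thesis
    by (simp add: comm_def matrix_diff_ldistrib matrix_mul_assoc[symmetric])
qed

lemma comm_neg_right [simp]: "comm A (- B) = - comm A B"
  by (simp add: comm_def vec_eq_iff matrix_matrix_mult_def sum_negf)

lemma comm_neg_left [simp]: "comm (- A) B = - comm A B"
  by (simp add: comm_def vec_eq_iff matrix_matrix_mult_def sum_negf)

lemma comm_self [simp]: "comm A A = 0"
  by (simp add: comm_def)

lemma comm_swap: "comm B A = - comm A B"
  by (simp add: comm_def)

lemma mat_ii_mult_mat_ii: "mat \<i> ** (mat \<i> ** A) = - A"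
  by (simp add: vec_eq_iff mat_matrix_mult_nth)

definition pair_representation :: "complex^'n^'n \<Rightarrow> complex^'n^'n \<Rightarrow> nat \<Rightarrow> complex^'n^'n"
  where "pair_representation A B k =
    (if k = 1 then A else if k = 2 then B else if k = 3 then mat \<i>
     else if k = 5 then mat \<i> ** A else if k = 6 then - (mat \<i> ** B) else 0)"

lemma AR_relations_pair_representation: "AR_relations (pair_representation A B)"
  by (simp add: AR_relations_def pair_representation_def mat_ii_mult_mat_ii matrix_minus_right
      comm_swap[of A B])

lemma pair_representation_generators:
  "{A, B, mat \<i>} \<subseteq> real_subalg_gen (pair_representation A B ` {1..7})"
proof -
  have "{A, B, mat \<i>} \<subseteq> pair_representation A B ` {1..7}"
    by (auto simp: pair_representation_def image_iff intro: bexI[of _ 1] bexI[of _ 2] bexI[of _ 3])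
  then show ?thesis
    by (blast intro: real_subalg_gen.gen)
qed

definition matrix_unit :: "'n \<Rightarrow> 'n \<Rightarrow> 'a::zero_neq_one^'n^'n"
  where "matrix_unit a b = (\<chi> i j. if i = a \<and> j = b then 1 else 0)"

definition perm_matrix :: "('n \<Rightarrow> 'n) \<Rightarrow> 'a::zero_neq_one^'n^'n"
  where "perm_matrix \<sigma> = (\<chi> i j. if i = \<sigma> j then 1 else 0)"

lemma perm_matrix_mult_matrix_unit:
  "perm_matrix \<sigma> ** matrix_unit a b = (matrix_unit (\<sigma> a) b :: 'a::semiring_1^'n^'n)"
proof -
  have "(if i = \<sigma> l then 1 else 0) * (if l = a \<and> j = b then 1 else 0) =
      (if l = a then if i = \<sigma> a \<and> j = b then 1 else 0 else (0::'a))" for i j l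
    by simp
  then show ?thesis
    by (simp add: vec_eq_iff matrix_matrix_mult_def perm_matrix_def matrix_unit_def)
qed

lemma matrix_unit_mult_perm_matrix:
  assumes "inj \<sigma>"
  shows "matrix_unit a (\<sigma> b) ** perm_matrix \<sigma> = (matrix_unit a b :: 'a::semiring_1^'n^'n)"
proof -
  have "(if i = a \<and> l = \<sigma> b then 1 else 0) * (if l = \<sigma> j then 1 else 0) =
      (if l = \<sigma> b then if i = a \<and> j = b then 1 else 0 else (0::'a))" for i j l
    using assms by (auto simp: inj_eq)
  then show ?thesis
    by (simp add: vec_eq_iff matrix_matrix_mult_def perm_matrix_def matrix_unit_def)
qed

lemma matrix_unit_mult_matrix_unit:
  "matrix_unit a b ** matrix_unit b c = (matrix_unit a c :: 'a::semiring_1^'n^'n)"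
proof -
  have "(if i = a \<and> l = b then 1 else 0) * (if l = b \<and> j = c then 1 else 0) =
      (if l = b then if i = a \<and> j = c then 1 else 0 else (0::'a))" for i j l
    by simp
  then show ?thesis
    by (simp add: vec_eq_iff matrix_matrix_mult_def matrix_unit_def)
qed

lemma matrix_unit_expansion:
  "(\<Sum>a\<in>UNIV. \<Sum>b\<in>UNIV. mat (M $ a $ b) ** matrix_unit a b) = (M :: 'a::semiring_1^'n^'n)"
proof -
  have "(\<Sum>b\<in>UNIV. M $ a $ b * (if i = a \<and> j = b then 1 else 0)) = (if i = a then M $ a $ j else 0)"
    for i j a :: 'n
    by (cases "i = a") (simp_all add: if_distrib[of "times _"] cong: if_cong)
  then show ?thesis
    by (simp add: vec_eq_iff mat_matrix_mult_nth matrix_unit_def)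
qed

lemma exists_cyclic_permutation:
  "\<exists>\<sigma> :: 'a::finite \<Rightarrow> 'a. inj \<sigma> \<and> (\<forall>x y. \<exists>k. (\<sigma> ^^ k) x = y)"
proof -
  obtain cs :: "'a list" where cs: "distinct cs" "set cs = UNIV"
    using finite_distinct_list[of "UNIV :: 'a set"] by auto
  let ?\<sigma> = "cycle_of_list cs"
  have "\<exists>k. (?\<sigma> ^^ k) x = y" for x y
  proof -
    obtain i j where ij: "i < length cs" "j < length cs" "x = cs ! i" "y = cs ! j"
      using cs(2) by (metis UNIV_I in_set_conv_nth)
    have "(?\<sigma> ^^ (j + length cs - i)) x = rotate (j + length cs - i) cs ! i"
      using cyclic_rotation[OF cs(1)] ij by (metis nth_map)
    also have "\<dots> = y"
      using ij by (simp add: nth_rotate)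
    finally show ?thesis ..
  qed
  moreover have "inj ?\<sigma>"
    using permutation_of_cycle bij_is_inj permutation_bijective by blast
  ultimately show ?thesis by blast
qed

lemma real_subalg_gen_zero: "0 \<in> real_subalg_gen S"
  using real_subalg_gen.scale[OF real_subalg_gen.one, where r = 0] by simp

lemma real_subalg_gen_sum:
  assumes "\<And>x. x \<in> F \<Longrightarrow> f x \<in> real_subalg_gen S"
  shows "sum f F \<in> real_subalg_gen S"
proof (cases "finite F")
  case True
  then show ?thesis using assms
    by (induction F rule: finite_induct) (simp_all add: real_subalg_gen_zero real_subalg_gen.add)
qed (simp add: real_subalg_gen_zero)

lemma mat_in_real_subalg_gen:
  assumes "mat \<i> \<in> real_subalg_gen S"
  shows "mat c \<in> real_subalg_gen S"
proof -
  have "mat c = Re c *\<^sub>R mat 1 + Im c *\<^sub>R (mat \<i> :: complex^'n^'n)"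
    by (simp add: vec_eq_iff mat_def complex_eq_iff)
  then show ?thesis
    by (metis assms real_subalg_gen.add real_subalg_gen.scale real_subalg_gen.one)
qed

lemma real_subalg_gen_eq_UNIV_if_matrix_units:
  assumes "mat \<i> \<in> real_subalg_gen S" and "\<And>a b. matrix_unit a b \<in> real_subalg_gen S"
  shows "real_subalg_gen S = UNIV"
proof -
  have "M \<in> real_subalg_gen S" for M
    by (subst matrix_unit_expansion[of M, symmetric])
      (intro real_subalg_gen_sum real_subalg_gen.mult mat_in_real_subalg_gen[OF assms(1)] assms(2))
  then show ?thesis by blast
qed

lemma matrix_unit_in_real_subalg_gen:
  assumes "inj \<sigma>" and orbit: "\<And>x y. \<exists>k. (\<sigma> ^^ k) x = y"
    and "matrix_unit c c \<in> real_subalg_gen S" and "perm_matrix \<sigma> \<in> real_subalg_gen S"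
  shows "matrix_unit a b \<in> real_subalg_gen S"
proof -
  have column: "matrix_unit ((\<sigma> ^^ k) c) c \<in> real_subalg_gen S" for k
  proof (induction k)
    case (Suc k)
    then show ?case
      using real_subalg_gen.mult[OF assms(4) Suc] by (simp add: perm_matrix_mult_matrix_unit)
  qed (simp add: assms(3))
  have row: "(\<sigma> ^^ k) b = c \<Longrightarrow> matrix_unit c b \<in> real_subalg_gen S" for k b
  proof (induction k arbitrary: b)
    case (Suc k)
    then have "matrix_unit c (\<sigma> b) \<in> real_subalg_gen S"
      by (simp only: funpow_Suc_right o_apply)
    from real_subalg_gen.mult[OF this assms(4)] show ?case
      by (simp add: matrix_unit_mult_perm_matrix[OF assms(1)])
  qed (simp add: assms(3))
  obtain k m where "(\<sigma> ^^ k) c = a" "(\<sigma> ^^ m) b = c"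
    using orbit by blast
  then have "matrix_unit a c ** matrix_unit c b \<in> real_subalg_gen S"
    using column row by (blast intro: real_subalg_gen.mult)
  then show ?thesis
    by (simp add: matrix_unit_mult_matrix_unit)
qed

theorem corollary6p4:
  shows "\<exists>X :: nat \<Rightarrow> complex^'n^'n.
           AR_relations X \<and> real_subalg_gen (X ` {1..7}) = UNIV"
proof -
  obtain \<sigma> :: "'n \<Rightarrow> 'n" where "inj \<sigma>" and orbit: "\<And>x y. \<exists>k. (\<sigma> ^^ k) x = y"
    using exists_cyclic_permutation by blast
  fix c :: 'n
  define X where "X = pair_representation (matrix_unit c c) (perm_matrix \<sigma>)"
  have "matrix_unit c c \<in> real_subalg_gen (X ` {1..7})"
    and "perm_matrix \<sigma> \<in> real_subalg_gen (X ` {1..7})"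
    and "mat \<i> \<in> real_subalg_gen (X ` {1..7})"
    using pair_representation_generators unfolding X_def by blast+
  then have "real_subalg_gen (X ` {1..7}) = UNIV"
    using matrix_unit_in_real_subalg_gen[OF \<open>inj \<sigma>\<close> orbit]
    by (intro real_subalg_gen_eq_UNIV_if_matrix_units) blast+
  moreover have "AR_relations X"
    unfolding X_def by (rule AR_relations_pair_representation)
  ultimately show ?thesis by blast
qed

end
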